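(* Let $p\in(1,\infty)$ and $n_1,n_2\in\mathbb N$ with $n_1\le n_2$. If $\mathbb H^{n_2}\in\mathbb T^{n_2}_p(\tau,m)$ with $\tau>0$, then $$\mathbb H^{n_1}(\mathbb H^{n_2}):=\Big\{\frac{\boldsymbol z}{\|\boldsymbol z\|_p}:\boldsymbol z\in\mathbb R^{n_1},\ \boldsymbol z\ne\boldsymbol0,\ \boldsymbol z\vee\boldsymbol y\in\mathbb H^{n_2}\text{ for some }\boldsymbol y\in\mathbb R^{n_2-n_1}\Big\}\in\mathbb T^{n_1}_p(\tau,m).$$
   Context: $1/p+1/q=1$; $\mathbb S^N_p$ unit $\ell_p$-sphere in $\mathbb R^N$; $\mathbb T^N_p(\tau,m)$ the family of $\mathbb H\subseteq\mathbb S^N_p$ with $|\mathbb H|\le m$ such that every $\boldsymbol x\in\mathbb S^N_q$ has $\boldsymbol v\in\mathbb H$ with $\boldsymbol x^{\mathrm T}\boldsymbol v\ge\tau$. $\boldsymbol z\vee\boldsymbol y$ is the concatenation of vectors. *)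

theory Defs
  imports Complex_Main
begin

text \<open>Vectors in R^N are represented as real lists of length N; concatenation
  of vectors is list append.\<close>

definition lpnorm :: "real \<Rightarrow> real list \<Rightarrow> real" where
  "lpnorm p x = (\<Sum>i<length x. \<bar>x ! i\<bar> powr p) powr (1 / p)"

definition ldot :: "real list \<Rightarrow> real list \<Rightarrow> real" where
  "ldot x v = (\<Sum>i<length x. x ! i * v ! i)"

definition conj_exp :: "real \<Rightarrow> real" where
  "conj_exp p = p / (p - 1)"

definition lsphere :: "nat \<Rightarrow> real \<Rightarrow> real list set" where
  "lsphere N p = {x. length x = N \<and> lpnorm p x = 1}"

definition Tfam :: "nat \<Rightarrow> real \<Rightarrow> real \<Rightarrow> nat \<Rightarrow> real list set set" where
  "Tfam N p \<tau> m = {H. H \<subseteq> lsphere N p \<and> finite H \<and> card H \<le> m \<and>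
      (\<forall>x\<in>lsphere N (conj_exp p). \<exists>v\<in>H. ldot x v \<ge> \<tau>)}"

definition Hproj :: "nat \<Rightarrow> nat \<Rightarrow> real \<Rightarrow> real list set \<Rightarrow> real list set" where
  "Hproj n1 n2 p H = {map (\<lambda>t. t / lpnorm p z) z | z. length z = n1 \<and> z \<noteq> replicate n1 0 \<and>
      (\<exists>y. length y = n2 - n1 \<and> z @ y \<in> H)}"

end

theory Submission imports Defs begin

(* Pad a dual vector x with zeros and pick v = z @ y in H covering it. The padding makes
   ldot x z = ldot (x @ 0) v \<ge> \<tau> > 0, so the head z is nonzero, and lpnorm p z \<le> lpnorm p v = 1.
   Normalising z therefore only increases the positive inner product with x, and the
   normalised heads form an image of H, so there are at most card H of them. *)

definition lpnormalize :: "real \<Rightarrow> real list \<Rightarrow> real list" where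
  "lpnormalize p z = map (\<lambda>t. t / lpnorm p z) z"

lemma lpnorm_conv_sum_list:
  "lpnorm p x = sum_list (map (\<lambda>t. \<bar>t\<bar> powr p) x) powr (1 / p)"
  by (simp add: lpnorm_def sum_list_sum_nth atLeast0LessThan)

lemma sum_list_abs_powr_nonneg: "0 \<le> sum_list (map (\<lambda>t. \<bar>t\<bar> powr p) x)" for p :: real
  by (induction x) auto

lemma lpnorm_append_replicate_zero: "lpnorm p (x @ replicate k 0) = lpnorm p x"
  by (simp add: lpnorm_conv_sum_list sum_list_replicate)

lemma lpnorm_take_le:
  assumes "0 < p"
  shows "lpnorm p (take n v) \<le> lpnorm p v"
proof -
  let ?S = "\<lambda>x. sum_list (map (\<lambda>t. \<bar>t\<bar> powr p) x)"
  have "?S v = ?S (take n v) + ?S (drop n v)"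
    by (metis append_take_drop_id map_append sum_list_append)
  then have "?S (take n v) \<le> ?S v"
    using sum_list_abs_powr_nonneg[of p "drop n v"] by linarith
  then show ?thesis
    using assms sum_list_abs_powr_nonneg[of p "take n v"]
    by (simp add: lpnorm_conv_sum_list powr_mono2)
qed

lemma lpnorm_pos:
  assumes "t \<in> set z" "t \<noteq> 0"
  shows "0 < lpnorm p z"
proof -
  have "0 < \<bar>t\<bar> powr p" using assms(2) by simp
  also have "\<dots> \<le> sum_list (map (\<lambda>t. \<bar>t\<bar> powr p) z)"
    using assms(1) by (intro member_le_sum_list) auto
  finally show ?thesis by (simp add: lpnorm_conv_sum_list)
qed

lemma lpnorm_divide:
  assumes "0 < p" "0 < c"
  shows "lpnorm p (map (\<lambda>t. t / c) z) = lpnorm p z / c"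
proof -
  have "sum_list (map (\<lambda>t. \<bar>t / c\<bar> powr p) z) = sum_list (map (\<lambda>t. \<bar>t\<bar> powr p) z) / c powr p"
    using assms by (induction z) (auto simp: powr_divide add_divide_distrib)
  moreover have "(c powr p) powr (1 / p) = c"
    using assms by (simp add: powr_powr)
  ultimately show ?thesis
    using assms sum_list_abs_powr_nonneg[of p z]
    by (simp add: lpnorm_conv_sum_list o_def powr_divide)
qed

lemma lpnorm_lpnormalize:
  assumes "0 < p" "t \<in> set z" "t \<noteq> 0"
  shows "lpnorm p (lpnormalize p z) = 1"
  using lpnorm_pos[OF assms(2,3), of p] lpnorm_divide[OF assms(1)]
  by (simp add: lpnormalize_def)

lemma ldot_conv_sum_list:
  "length x = length v \<Longrightarrow> ldot x v = sum_list (map2 (*) x v)"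
  by (simp add: ldot_def sum_list_sum_nth atLeast0LessThan)

lemma ldot_append:
  assumes "length x = length z" "length x' = length z'"
  shows "ldot (x @ x') (z @ z') = ldot x z + ldot x' z'"
  using assms by (simp add: ldot_conv_sum_list)

lemma ldot_replicate_zero_left: "ldot (replicate k 0) y = 0"
  by (simp add: ldot_def)

lemma ldot_replicate_zero_right: "ldot x (replicate (length x) 0) = 0"
  by (simp add: ldot_def)

lemma ldot_divide_right:
  "length x = length z \<Longrightarrow> ldot x (map (\<lambda>t. t / c) z) = ldot x z / c"
  by (simp add: ldot_def sum_divide_distrib)

lemma ldot_le_ldot_lpnormalize:
  assumes "length x = length z" "0 < ldot x z" "t \<in> set z" "t \<noteq> 0" "lpnorm p z \<le> 1"
  shows "ldot x z \<le> ldot x (lpnormalize p z)"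
proof -
  have "0 < lpnorm p z" using lpnorm_pos[OF assms(3,4)] .
  then have "ldot x z \<le> ldot x z / lpnorm p z"
    using assms(2,5) by (simp add: le_divide_eq)
  then show ?thesis
    using assms(1) by (simp add: lpnormalize_def ldot_divide_right)
qed

lemma Hproj_eq:
  "Hproj n1 n2 p H = {lpnormalize p z | z. length z = n1 \<and> z \<noteq> replicate n1 0 \<and>
      (\<exists>y. length y = n2 - n1 \<and> z @ y \<in> H)}"
  by (simp add: Hproj_def lpnormalize_def)

lemma Hproj_subset_image: "Hproj n1 n2 p H \<subseteq> (\<lambda>v. lpnormalize p (take n1 v)) ` H"
  unfolding Hproj_eq by force

lemma finite_Hproj: "finite H \<Longrightarrow> finite (Hproj n1 n2 p H)"
  by (rule finite_subset[OF Hproj_subset_image finite_imageI])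

lemma card_Hproj_le:
  assumes "finite H"
  shows "card (Hproj n1 n2 p H) \<le> card H"
proof -
  have "card (Hproj n1 n2 p H) \<le> card ((\<lambda>v. lpnormalize p (take n1 v)) ` H)"
    by (rule card_mono[OF finite_imageI[OF assms] Hproj_subset_image])
  also have "\<dots> \<le> card H"
    by (rule card_image_le[OF assms])
  finally show ?thesis .
qed

lemma nonzero_list_has_nonzero:
  "z \<noteq> replicate (length z) 0 \<Longrightarrow> \<exists>t\<in>set z. t \<noteq> 0"
  by (metis in_set_replicate replicate_length_same)

lemma Hproj_subset_lsphere:
  assumes "0 < p"
  shows "Hproj n1 n2 p H \<subseteq> lsphere n1 p"
  unfolding Hproj_eq lsphere_def
  using lpnorm_lpnormalize[OF assms] nonzero_list_has_nonzero
  by (force simp: lpnormalize_def)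

lemma append_replicate_zero_in_lsphere:
  "x \<in> lsphere n q \<Longrightarrow> n \<le> N \<Longrightarrow> x @ replicate (N - n) 0 \<in> lsphere N q"
  by (simp add: lsphere_def lpnorm_append_replicate_zero)

lemma Hproj_covers:
  assumes "0 < p" "0 < \<tau>" "n1 \<le> n2" "H \<subseteq> lsphere n2 p"
    and covers: "\<forall>x\<in>lsphere n2 q. \<exists>v\<in>H. \<tau> \<le> ldot x v"
    and x: "x \<in> lsphere n1 q"
  shows "\<exists>w\<in>Hproj n1 n2 p H. \<tau> \<le> ldot x w"
proof -
  obtain v where "v \<in> H" and v_covers: "\<tau> \<le> ldot (x @ replicate (n2 - n1) 0) v"
    using covers append_replicate_zero_in_lsphere[OF x assms(3)] by blast
  then have v: "length v = n2" "lpnorm p v = 1"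
    using assms(4) by (auto simp: lsphere_def)
  define z y where "z = take n1 v" and "y = drop n1 v"
  have "v = z @ y" and z: "length z = n1" and y: "length y = n2 - n1"
    using v assms(3) by (auto simp: z_def y_def)
  have "\<tau> \<le> ldot x z"
    using v_covers x z y
    by (simp add: \<open>v = z @ y\<close> ldot_append ldot_replicate_zero_left lsphere_def)
  then have "z \<noteq> replicate n1 0"
    using assms(2) x by (auto simp: lsphere_def ldot_replicate_zero_right)
  then obtain t where t: "t \<in> set z" "t \<noteq> 0"
    using nonzero_list_has_nonzero z by blast
  have "lpnorm p z \<le> 1"
    using lpnorm_take_le[OF assms(1), of n1 v] v by (simp add: z_def)
  then have "\<tau> \<le> ldot x (lpnormalize p z)"
    using \<open>\<tau> \<le> ldot x z\<close> assms(2) x z t ldot_le_ldot_lpnormalize[of x z t p]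
    by (simp add: lsphere_def)
  moreover have "lpnormalize p z \<in> Hproj n1 n2 p H"
    unfolding Hproj_eq using z y \<open>v = z @ y\<close> \<open>v \<in> H\<close> \<open>z \<noteq> replicate n1 0\<close> by blast
  ultimately show ?thesis by blast
qed

theorem lemma4p7:
  fixes p \<tau> :: real and n1 n2 m :: nat and H :: "real list set"
  assumes "1 < p" and "n1 \<le> n2" and "\<tau> > 0"
    and "H \<in> Tfam n2 p \<tau> m"
  shows "Hproj n1 n2 p H \<in> Tfam n1 p \<tau> m"
proof -
  have "0 < p" using assms(1) by simp
  have H: "H \<subseteq> lsphere n2 p" "finite H" "card H \<le> m"
    and covers: "\<forall>x\<in>lsphere n2 (conj_exp p). \<exists>v\<in>H. \<tau> \<le> ldot x v"
    using assms(4) by (auto simp: Tfam_def)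
  show ?thesis
    unfolding Tfam_def
    using Hproj_subset_lsphere[OF \<open>0 < p\<close>] finite_Hproj[OF H(2)]
      order_trans[OF card_Hproj_le[OF H(2)] H(3)] Hproj_covers[OF \<open>0 < p\<close> assms(3,2) H(1) covers]
    by auto
qed

end
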